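(* Let $n\ge1$, distinct real $a_1,\dots,a_n$, $F(a)=\sum_{k=0}^nA_ka^k=\prod_{i=1}^n(a-a_i)$, signs $\epsilon_i$, reals $\xi_i,\nu_n$, $\Delta_i=\epsilon_i(a-a_i)$, $x=\frac{\nu_n}2a+\sum_i\xi_i\Delta_i^{-1/2}$ on an interval of $a>0$ where all $\Delta_i>0$ and $\dot x\ne0$. Let $H=\Pi^2+aP_y^2$, $\Pi=\frac a{\dot x}P_a$, $$G=\sum_{k=0}^nA_{n-k}H^{n-k}P_y^{2k+1},\ Q_1=\sum_{k=0}^n\tilde b_kH^{n-k}\Pi P_y^{2k},\ Q_2=\sum_{k=0}^n\tilde c_kH^{n-k}P_y^{2k+1},\ S_1=Q_1+yG,\ S_2=Q_2+yQ_1+\tfrac{y^2}2G,$$ with $\tilde b_k=(-1)^k\big(\nu_n\sigma_k+\sum_i\frac{\xi_i}{\sqrt{\Delta_i}}\sigma^i_{k-1}\big)$ and $\tilde c_k=\frac{(-1)^{k+1}}2\big\{\nu_n^2a\sigma_k+2\nu_n\sum_i\frac{\xi_i}{\sqrt{\Delta_i}}(\sigma^i_k+a\sigma^i_{k-1})+\sum_i\frac{\xi_i^2}{\Delta_i}\sigma^i_{k-1}+\sum_{i\ne j}\frac{\xi_i\xi_j}{\sqrt{\Delta_i\Delta_j}}(\sigma^{ij}_{k-1}+a\sigma^{ij}_{k-2})\big\}$. Then $$S_1^2-2G\,S_2=\sum_{k,l=1}^n\mathcal{Q}_{kl}\,H^{2n-k-l}P_y^{2(k+l+1)}+\nu_n^2\sum_{k,l=0}^n(-1)^{k+l}\sigma_k\sigma_l\,H^{2n+1-k-l}P_y^{2(k+l)},$$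 where $\mathcal{Q}_{kl}=(-1)^{k+l+1}\sum_{i=1}^n\epsilon_i\xi_i^2\sigma^i_{k-1}\sigma^i_{l-1}$.
   Context: Symmetric functions: $\sigma_k$ by $\prod_i(a-a_i)=\sum_{k=0}^n(-1)^k\sigma_ka^{n-k}$; $\sigma^i_m$ ($-1\le m\le n$) by $\prod_{l\ne i}(a-a_l)=\sum_{m=0}^{n-1}(-1)^m\sigma^i_ma^{n-1-m}$ with $\sigma^i_{-1}=\sigma^i_n=0$; $\sigma^{ij}_m$ ($i\ne j$, $-2\le m\le n$) by $\prod_{l\ne i,j}(a-a_l)=\sum_{m=0}^{n-2}(-1)^m\sigma^{ij}_ma^{n-2-m}$ with $\sigma^{ij}_{-2}=\sigma^{ij}_{-1}=\sigma^{ij}_{n-1}=\sigma^{ij}_n=0$. *)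

theory Defs
  imports "HOL-Analysis.Analysis" "HOL-Computational_Algebra.Polynomial"
begin

definition root_poly :: "nat set \<Rightarrow> (nat \<Rightarrow> real) \<Rightarrow> real poly" where
  "root_poly I as = (\<Prod>i\<in>I. [:- as i, 1:])"

text \<open>Elementary symmetric functions, defined as in the paper by
  prod over I of (X - a_l) = sum_{m=0}^{|I|} (-1)^m sig_m X^(|I|-m),
  with integer index m and sig_m = 0 for m < 0 or m > |I|.
  sigma_k = sig {1..n}, sigma^i_m = sig ({1..n}-{i}), sigma^{ij}_m = sig ({1..n}-{i,j}).\<close>
definition sig :: "nat set \<Rightarrow> (nat \<Rightarrow> real) \<Rightarrow> int \<Rightarrow> real" where
  "sig I as m = (if 0 \<le> m \<and> m \<le> int (card I)
      then (-1) ^ nat m * coeff (root_poly I as) (card I - nat m) else 0)"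

end

(* Write u = H and v = P_y^2.  Every sum in the statement is a binary form
   sum_k (-1)^k b_k u^(n-k) v^k, and by the defining relation of the symmetric functions of J
   (J = I, I - {i}, I - {i,j}) the form with coefficients sigma^J_(k-d) equals
   (-1)^d u^(n-|J|-d) v^d F_J, where F_J = prod_(l in J) (u - a_l v).  Hence, with c_i = xi_i / sqrt Delta_i,
   T = sum_i c_i F_i, C = sum_i c_i^2 F_i and W = sum_(i<>j) c_i c_j F_ij,
     G = P_y F,  Q_1 = Pi (nu F - v T),  Q_2 = -(P_y/2) (nu^2 a F + 2 nu (u - a v) T - v C - v (u - a v) W).
   The combination S_1^2 - 2 G S_2 = Q_1^2 - 2 G Q_2 does not depend on y.  Using Pi^2 = u - a v,
   T^2 = sum_i c_i^2 F_i^2 + F W and F = (u - a_i v) F_i together with c_i^2 (a - a_i) = eps_i xi_i^2,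
   it collapses to nu^2 u F^2 - v^3 sum_i eps_i xi_i^2 F_i^2, and the two double sums of the
   right-hand side are precisely the expansions of these two terms. *)

theory Submission
  imports Defs
begin

definition root_prod :: "nat set \<Rightarrow> (nat \<Rightarrow> real) \<Rightarrow> real \<Rightarrow> real \<Rightarrow> real" where
  "root_prod I as u v = (\<Prod>i\<in>I. u - as i * v)"

definition alt_binary_form :: "nat \<Rightarrow> real \<Rightarrow> real \<Rightarrow> (nat \<Rightarrow> real) \<Rightarrow> real" where
  "alt_binary_form N u v b = (\<Sum>k=0..N. (-1) ^ k * b k * u ^ (N - k) * v ^ k)"

lemma degree_root_poly: "degree (root_poly I as) = card I"
  unfolding root_poly_def by (subst degree_prod_eq_sum_degree) auto

lemma coeff_root_poly_card: "coeff (root_poly I as) (card I) = 1"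
  using lead_coeff_prod[of "\<lambda>i. [:- as i, 1:]" I] degree_root_poly[of I as]
  unfolding root_poly_def by simp

lemma root_poly_homogenized:
  assumes "finite I"
  shows "(\<Sum>j\<le>card I. coeff (root_poly I as) j * u ^ j * v ^ (card I - j)) = root_prod I as u v"
proof (cases "v = 0")
  case True
  have "(\<Sum>j\<le>card I. coeff (root_poly I as) j * u ^ j * v ^ (card I - j))
      = (\<Sum>j\<in>{card I}. coeff (root_poly I as) j * u ^ j * v ^ (card I - j))"
    by (rule sum.mono_neutral_right) (auto simp: True)
  then show ?thesis
    using True coeff_root_poly_card[of I as] by (simp add: root_prod_def)
next
  case False
  have "(\<Sum>j\<le>card I. coeff (root_poly I as) j * u ^ j * v ^ (card I - j))
      = v ^ card I * (\<Sum>j\<le>card I. coeff (root_poly I as) j * (u / v) ^ j)"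
    unfolding sum_distrib_left
    by (rule sum.cong) (auto simp: False power_divide power_diff)
  also have "\<dots> = v ^ card I * poly (root_poly I as) (u / v)"
    by (simp add: poly_altdef degree_root_poly)
  also have "\<dots> = (\<Prod>i\<in>I. v) * (\<Prod>i\<in>I. u / v - as i)"
    by (simp add: root_poly_def poly_prod)
  also have "\<dots> = root_prod I as u v"
    unfolding root_prod_def prod.distrib[symmetric]
    by (rule prod.cong) (auto simp: False field_simps)
  finally show ?thesis .
qed

lemma coeff_root_poly_eq_sig:
  assumes "k \<le> card I"
  shows "coeff (root_poly I as) (card I - k) = (-1) ^ k * sig I as (int k)"
  using assms by (simp add: sig_def flip: power_mult_distrib)

lemma alt_binary_form_sig:
  assumes "finite I"
  shows "alt_binary_form (card I) u v (\<lambda>k. sig I as (int k)) = root_prod I as u v"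
proof -
  have "alt_binary_form (card I) u v (\<lambda>k. sig I as (int k))
      = (\<Sum>k=0..card I. coeff (root_poly I as) (card I - k) * u ^ (card I - k) * v ^ (card I - (card I - k)))"
    unfolding alt_binary_form_def
    by (rule sum.cong) (auto simp: coeff_root_poly_eq_sig)
  also have "\<dots> = (\<Sum>j=0..card I. coeff (root_poly I as) j * u ^ j * v ^ (card I - j))"
    by (subst sum.atLeastAtMost_rev) simp
  finally show ?thesis
    using root_poly_homogenized[OF assms] by (simp add: atLeast0AtMost)
qed

lemma alt_binary_form_sig_shift:
  assumes "finite I" "card I + d \<le> N"
  shows "alt_binary_form N u v (\<lambda>k. sig I as (int k - int d))
     = (-1) ^ d * u ^ (N - card I - d) * v ^ d * root_prod I as u v"
proof -
  let ?f = "\<lambda>k. (-1) ^ k * sig I as (int k - int d) * u ^ (N - k) * v ^ k"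
  have "alt_binary_form N u v (\<lambda>k. sig I as (int k - int d)) = sum ?f {0 + d..card I + d}"
    unfolding alt_binary_form_def
    by (rule sum.mono_neutral_right) (use assms in \<open>auto simp: sig_def\<close>)
  also have "\<dots> = (\<Sum>j=0..card I. ?f (j + d))"
    by (rule sum.shift_bounds_cl_nat_ivl)
  also have "\<dots> = (\<Sum>j=0..card I. (-1) ^ d * u ^ (N - card I - d) * v ^ d
                     * ((-1) ^ j * sig I as (int j) * u ^ (card I - j) * v ^ j))"
  proof (rule sum.cong)
    fix j assume "j \<in> {0..card I}"
    then have "N - (j + d) = (N - card I - d) + (card I - j)" using assms by auto
    then show "?f (j + d) = (-1) ^ d * u ^ (N - card I - d) * v ^ d
                 * ((-1) ^ j * sig I as (int j) * u ^ (card I - j) * v ^ j)"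
      by (simp add: power_add)
  qed simp
  also have "\<dots> = (-1) ^ d * u ^ (N - card I - d) * v ^ d * root_prod I as u v"
    using alt_binary_form_sig[OF assms(1), of u v as]
    by (simp add: alt_binary_form_def flip: sum_distrib_left)
  finally show ?thesis .
qed

lemma alt_binary_form_sig_shift1:
  assumes "finite I" "card I + 1 \<le> N"
  shows "alt_binary_form N u v (\<lambda>k. sig I as (int k - 1))
     = - (u ^ (N - card I - 1) * v * root_prod I as u v)"
  using alt_binary_form_sig_shift[OF assms] by simp

lemma alt_binary_form_sig_shift2:
  assumes "finite I" "card I + 2 \<le> N"
  shows "alt_binary_form N u v (\<lambda>k. sig I as (int k - 2))
     = u ^ (N - card I - 2) * v ^ 2 * root_prod I as u v"
  using alt_binary_form_sig_shift[OF assms] by simp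

lemma alt_binary_form_add:
  "alt_binary_form N u v (\<lambda>k. f k + g k) = alt_binary_form N u v f + alt_binary_form N u v g"
  by (simp add: alt_binary_form_def algebra_simps sum.distrib)

lemma alt_binary_form_cmult:
  "alt_binary_form N u v (\<lambda>k. c * f k) = c * alt_binary_form N u v f"
  by (simp add: alt_binary_form_def sum_distrib_left algebra_simps)

lemma alt_binary_form_sum:
  "alt_binary_form N u v (\<lambda>k. \<Sum>i\<in>A. f i k) = (\<Sum>i\<in>A. alt_binary_form N u v (f i))"
  unfolding alt_binary_form_def
  by (subst sum.swap) (simp add: sum_distrib_left sum_distrib_right algebra_simps)

lemma alt_binary_form_mult:
  "alt_binary_form N u v f * alt_binary_form N u v g
     = (\<Sum>k=0..N. \<Sum>l=0..N. (-1) ^ (k + l) * f k * g l * u ^ (2 * N - k - l) * v ^ (k + l))"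
  unfolding alt_binary_form_def sum_product
proof (intro sum.cong refl)
  fix k l assume "k \<in> {0..N}" "l \<in> {0..N}"
  then have "2 * N - k - l = (N - k) + (N - l)" by auto
  then show "(-1) ^ k * f k * u ^ (N - k) * v ^ k * ((-1) ^ l * g l * u ^ (N - l) * v ^ l)
      = (-1) ^ (k + l) * f k * g l * u ^ (2 * N - k - l) * v ^ (k + l)"
    by (simp add: power_add)
qed

lemma root_prod_remove:
  assumes "finite I" "i \<in> I"
  shows "root_prod I as u v = (u - as i * v) * root_prod (I - {i}) as u v"
  unfolding root_prod_def using assms by (simp add: prod.remove)

lemma root_prod_remove_mult:
  assumes "finite I" "i \<in> I" "j \<in> I" "i \<noteq> j"
  shows "root_prod (I - {i}) as u v * root_prod (I - {j}) as u v
       = root_prod I as u v * root_prod (I - {i, j}) as u v"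
proof -
  have "I - {i, j} = (I - {j}) - {i}" by auto
  then have "root_prod (I - {j}) as u v = (u - as i * v) * root_prod (I - {i, j}) as u v"
    using root_prod_remove[of "I - {j}" i] assms by auto
  then show ?thesis
    using root_prod_remove[OF assms(1,2), of as u v] by simp
qed

lemma square_sum_root_prod_remove:
  assumes "finite I"
  shows "(\<Sum>i\<in>I. c i * root_prod (I - {i}) as u v) ^ 2
     = (\<Sum>i\<in>I. c i ^ 2 * root_prod (I - {i}) as u v ^ 2)
       + root_prod I as u v * (\<Sum>i\<in>I. \<Sum>j\<in>I - {i}. c i * c j * root_prod (I - {i, j}) as u v)"
proof -
  let ?R = "\<lambda>J. root_prod J as u v"
  have "(\<Sum>i\<in>I. c i * ?R (I - {i})) ^ 2 = (\<Sum>i\<in>I. \<Sum>j\<in>I. c i * ?R (I - {i}) * (c j * ?R (I - {j})))"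
    unfolding power2_eq_square by (rule sum_product)
  also have "\<dots> = (\<Sum>i\<in>I. c i ^ 2 * ?R (I - {i}) ^ 2
                    + ?R I * (\<Sum>j\<in>I - {i}. c i * c j * ?R (I - {i, j})))"
  proof (rule sum.cong)
    fix i assume i: "i \<in> I"
    have "(\<Sum>j\<in>I - {i}. c i * ?R (I - {i}) * (c j * ?R (I - {j})))
        = (\<Sum>j\<in>I - {i}. ?R I * (c i * c j * ?R (I - {i, j})))"
      by (rule sum.cong) (use assms i root_prod_remove_mult[of I i j as u v for j] in \<open>auto simp: algebra_simps\<close>)
    then show "(\<Sum>j\<in>I. c i * ?R (I - {i}) * (c j * ?R (I - {j})))
        = c i ^ 2 * ?R (I - {i}) ^ 2 + ?R I * (\<Sum>j\<in>I - {i}. c i * c j * ?R (I - {i, j}))"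
      using assms i by (simp add: sum.remove power2_eq_square sum_distrib_left algebra_simps)
  qed simp
  finally show ?thesis by (simp add: sum.distrib sum_distrib_left)
qed

lemma alt_binary_form_sig_remove:
  assumes "finite I" "i \<in> I"
  shows "alt_binary_form (card I) u v (\<lambda>k. sig (I - {i}) as (int k))
           = u * root_prod (I - {i}) as u v"
    and "alt_binary_form (card I) u v (\<lambda>k. sig (I - {i}) as (int k - 1))
           = - (v * root_prod (I - {i}) as u v)"
proof -
  have "card I = Suc (card (I - {i}))"
    using assms by (rule card.remove)
  then show "alt_binary_form (card I) u v (\<lambda>k. sig (I - {i}) as (int k))
           = u * root_prod (I - {i}) as u v"
    and "alt_binary_form (card I) u v (\<lambda>k. sig (I - {i}) as (int k - 1))
           = - (v * root_prod (I - {i}) as u v)"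
    using alt_binary_form_sig_shift[of "I - {i}" 0 "card I" u v as]
      alt_binary_form_sig_shift1[of "I - {i}" "card I" u v as] assms
    by simp_all
qed

lemma alt_binary_form_sig_remove2:
  assumes "finite I" "i \<in> I" "j \<in> I - {i}"
  shows "alt_binary_form (card I) u v (\<lambda>k. sig (I - {i, j}) as (int k - 1))
           = - (u * v * root_prod (I - {i, j}) as u v)"
    and "alt_binary_form (card I) u v (\<lambda>k. sig (I - {i, j}) as (int k - 2))
           = v ^ 2 * root_prod (I - {i, j}) as u v"
proof -
  have "card I = Suc (Suc (card (I - {i, j})))"
  proof -
    have "I - {i, j} = (I - {i}) - {j}" by auto
    then show ?thesis
      using assms card.remove[of I i] card.remove[of "I - {i}" j] by simp
  qed
  then show "alt_binary_form (card I) u v (\<lambda>k. sig (I - {i, j}) as (int k - 1))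
           = - (u * v * root_prod (I - {i, j}) as u v)"
    and "alt_binary_form (card I) u v (\<lambda>k. sig (I - {i, j}) as (int k - 2))
           = v ^ 2 * root_prod (I - {i, j}) as u v"
    using alt_binary_form_sig_shift1[of "I - {i, j}" "card I" u v as]
      alt_binary_form_sig_shift2[of "I - {i, j}" "card I" u v as] assms
    by simp_all
qed

lemma alt_binary_form_bt_coeffs:
  assumes "finite I"
  shows "alt_binary_form (card I) u v
           (\<lambda>k. nu * sig I as (int k) + (\<Sum>i\<in>I. c i * sig (I - {i}) as (int k - 1)))
       = nu * root_prod I as u v - v * (\<Sum>i\<in>I. c i * root_prod (I - {i}) as u v)"
  using assms
  by (simp add: alt_binary_form_add alt_binary_form_cmult alt_binary_form_sum
      alt_binary_form_sig alt_binary_form_sig_remove sum_distrib_left sum_negf mult_ac)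

lemma alt_binary_form_ct_coeffs:
  assumes "finite I"
  shows "alt_binary_form (card I) u v
           (\<lambda>k. nu ^ 2 * a * sig I as (int k)
              + 2 * nu * (\<Sum>i\<in>I. c i * (sig (I - {i}) as (int k) + a * sig (I - {i}) as (int k - 1)))
              + (\<Sum>i\<in>I. c i ^ 2 * sig (I - {i}) as (int k - 1))
              + (\<Sum>i\<in>I. \<Sum>j\<in>I - {i}. c i * c j
                   * (sig (I - {i, j}) as (int k - 1) + a * sig (I - {i, j}) as (int k - 2))))
       = nu ^ 2 * a * root_prod I as u v
         + 2 * nu * (u - a * v) * (\<Sum>i\<in>I. c i * root_prod (I - {i}) as u v)
         - v * (\<Sum>i\<in>I. c i ^ 2 * root_prod (I - {i}) as u v)
         - v * (u - a * v) * (\<Sum>i\<in>I. \<Sum>j\<in>I - {i}. c i * c j * root_prod (I - {i, j}) as u v)"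
    (is "?lhs = ?rhs")
proof -
  let ?R = "\<lambda>J. root_prod J as u v"
  have "?lhs
      = nu ^ 2 * a * ?R I
        + 2 * nu * (\<Sum>i\<in>I. (u - a * v) * (c i * ?R (I - {i})))
        + (\<Sum>i\<in>I. - v * (c i ^ 2 * ?R (I - {i})))
        + (\<Sum>i\<in>I. \<Sum>j\<in>I - {i}. - v * (u - a * v) * (c i * c j * ?R (I - {i, j})))"
    using assms
    by (simp add: alt_binary_form_add alt_binary_form_cmult alt_binary_form_sum
        alt_binary_form_sig alt_binary_form_sig_remove alt_binary_form_sig_remove2
        power2_eq_square algebra_simps)
  also have "\<dots> = ?rhs"
    by (simp only: sum_distrib_left[symmetric])
  finally show ?thesis .
qed

lemma reduced_invariant_identity:
  fixes u v a nu P Py F T C W D E :: real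
  assumes "P ^ 2 = u - a * v" "Py ^ 2 = v"
    and "T ^ 2 = D + F * W" "(u - a * v) * D - F * C = - (v * E)"
  shows "(P * (nu * F - v * T)) ^ 2
           - 2 * (Py * F) * (- (Py / 2) * (nu ^ 2 * a * F + 2 * nu * (u - a * v) * T - v * C - v * (u - a * v) * W))
         = nu ^ 2 * u * F ^ 2 - v ^ 3 * E"
    (is "(P * ?X) ^ 2 - 2 * (Py * F) * (- (Py / 2) * ?Y) = _")
proof -
  have "(P * ?X) ^ 2 - 2 * (Py * F) * (- (Py / 2) * ?Y) = P ^ 2 * ?X ^ 2 + Py ^ 2 * F * ?Y"
    by (simp add: power2_eq_square field_simps)
  also have "\<dots> = nu ^ 2 * u * F ^ 2 + v ^ 2 * ((u - a * v) * (T ^ 2 - F * W) - F * C)"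
    unfolding assms(1,2) by (simp add: power2_eq_square algebra_simps)
  also have "\<dots> = nu ^ 2 * u * F ^ 2 + v ^ 2 * ((u - a * v) * D - F * C)"
    using assms(3) by simp
  also have "\<dots> = nu ^ 2 * u * F ^ 2 - v ^ 3 * E"
    unfolding assms(4) by (simp add: power2_eq_square power3_eq_cube)
  finally show ?thesis .
qed

lemma weighted_sum_root_prod_remove:
  assumes "finite I" "\<And>i. i \<in> I \<Longrightarrow> c i ^ 2 * (a - as i) = e i"
  shows "(u - a * v) * (\<Sum>i\<in>I. c i ^ 2 * root_prod (I - {i}) as u v ^ 2)
           - root_prod I as u v * (\<Sum>i\<in>I. c i ^ 2 * root_prod (I - {i}) as u v)
         = - (v * (\<Sum>i\<in>I. e i * root_prod (I - {i}) as u v ^ 2))"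
proof -
  have summand: "(u - a * v) * (c i ^ 2 * root_prod (I - {i}) as u v ^ 2)
          - root_prod I as u v * (c i ^ 2 * root_prod (I - {i}) as u v)
        = - (v * (e i * root_prod (I - {i}) as u v ^ 2))" if "i \<in> I" for i
    unfolding root_prod_remove[OF assms(1) that, of as u v] assms(2)[OF that, symmetric]
    by (simp add: power2_eq_square algebra_simps)
  have "(u - a * v) * (\<Sum>i\<in>I. c i ^ 2 * root_prod (I - {i}) as u v ^ 2)
           - root_prod I as u v * (\<Sum>i\<in>I. c i ^ 2 * root_prod (I - {i}) as u v)
      = (\<Sum>i\<in>I. (u - a * v) * (c i ^ 2 * root_prod (I - {i}) as u v ^ 2)
           - root_prod I as u v * (c i ^ 2 * root_prod (I - {i}) as u v))"
    by (simp add: sum_distrib_left sum_subtractf)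
  also have "\<dots> = (\<Sum>i\<in>I. - (v * (e i * root_prod (I - {i}) as u v ^ 2)))"
    by (rule sum.cong) (simp_all add: summand)
  finally show ?thesis
    by (simp add: sum_distrib_left sum_negf)
qed

lemma double_sum_sig_eq_square:
  assumes "finite I" "card I = n"
  shows "(\<Sum>k=0..n. \<Sum>l=0..n. (-1) ^ (k + l) * sig I as (int k) * sig I as (int l)
            * u ^ (2 * n + 1 - k - l) * Py ^ (2 * (k + l)))
       = u * root_prod I as u (Py ^ 2) ^ 2"
proof -
  have "(\<Sum>k=0..n. \<Sum>l=0..n. (-1) ^ (k + l) * sig I as (int k) * sig I as (int l)
            * u ^ (2 * n + 1 - k - l) * Py ^ (2 * (k + l)))
      = u * (alt_binary_form n u (Py ^ 2) (\<lambda>k. sig I as (int k))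
             * alt_binary_form n u (Py ^ 2) (\<lambda>k. sig I as (int k)))"
    unfolding alt_binary_form_mult sum_distrib_left
  proof (intro sum.cong refl)
    fix k l assume "k \<in> {0..n}" "l \<in> {0..n}"
    then have "2 * n + 1 - k - l = Suc (2 * n - k - l)" by auto
    then show "(-1) ^ (k + l) * sig I as (int k) * sig I as (int l) * u ^ (2 * n + 1 - k - l) * Py ^ (2 * (k + l))
        = u * ((-1) ^ (k + l) * sig I as (int k) * sig I as (int l) * u ^ (2 * n - k - l) * (Py ^ 2) ^ (k + l))"
      by (simp flip: power_mult)
  qed
  then show ?thesis
    using alt_binary_form_sig[OF assms(1)] assms(2) by (simp add: power2_eq_square)
qed

lemma double_sum_sig_remove_eq:
  assumes "finite I" "card I = n"
  shows "(\<Sum>k=1..n. \<Sum>l=1..n. (-1) ^ (k + l + 1)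
            * (\<Sum>i\<in>I. e i * sig (I - {i}) as (int k - 1) * sig (I - {i}) as (int l - 1))
            * u ^ (2 * n - k - l) * Py ^ (2 * (k + l + 1)))
       = - (Py ^ 2 * (\<Sum>i\<in>I. e i * (Py ^ 2 * root_prod (I - {i}) as u (Py ^ 2)) ^ 2))"
proof -
  define v where "v = Py ^ 2"
  define s where "s = (\<lambda>i k. sig (I - {i}) as (int k - 1))"
  define g where "g = (\<lambda>i k l. - v * (e i * ((-1) ^ (k + l) * s i k * s i l * u ^ (2 * n - k - l) * v ^ (k + l))))"
  have s0: "s i 0 = 0" for i
    by (simp add: s_def sig_def)
  have Py_power: "Py ^ (2 * (k + l + 1)) = v * v ^ (k + l)" for k l
    unfolding v_def power_mult by simp
  have "(\<Sum>k=1..n. \<Sum>l=1..n. (-1) ^ (k + l + 1)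
            * (\<Sum>i\<in>I. e i * sig (I - {i}) as (int k - 1) * sig (I - {i}) as (int l - 1))
            * u ^ (2 * n - k - l) * Py ^ (2 * (k + l + 1)))
      = (\<Sum>k=1..n. \<Sum>l=1..n. \<Sum>i\<in>I. g i k l)"
    unfolding g_def s_def Py_power
    by (intro sum.cong refl) (simp add: sum_distrib_left sum_distrib_right algebra_simps)
  also have "\<dots> = (\<Sum>k=0..n. \<Sum>l=0..n. \<Sum>i\<in>I. g i k l)"
    by (simp add: sum.atLeast_Suc_atMost[of 0 n] g_def s0)
  also have "\<dots> = (\<Sum>i\<in>I. \<Sum>k=0..n. \<Sum>l=0..n. g i k l)"
    by (subst sum.swap) (simp add: sum.swap[of _ I])
  also have "\<dots> = (\<Sum>i\<in>I. - v * (e i * (alt_binary_form n u v (s i) * alt_binary_form n u v (s i))))"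
    unfolding alt_binary_form_mult g_def by (simp add: sum_distrib_left)
  also have "\<dots> = - (v * (\<Sum>i\<in>I. e i * (v * root_prod (I - {i}) as u v) ^ 2))"
    using assms(1) unfolding assms(2)[symmetric]
    by (simp add: s_def alt_binary_form_sig_remove power2_eq_square sum_distrib_left sum_negf)
  finally show ?thesis unfolding v_def .
qed

lemma sum_coeff_root_poly_powers:
  assumes "finite I" "card I = n"
  shows "(\<Sum>k=0..n. coeff (root_poly I as) (n - k) * u ^ (n - k) * Py ^ (2 * k + 1))
       = Py * root_prod I as u (Py ^ 2)"
proof -
  have "(\<Sum>k=0..n. coeff (root_poly I as) (n - k) * u ^ (n - k) * Py ^ (2 * k + 1))
      = Py * alt_binary_form n u (Py ^ 2) (\<lambda>k. sig I as (int k))"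
    unfolding alt_binary_form_def sum_distrib_left
  proof (intro sum.cong refl)
    fix k assume "k \<in> {0..n}"
    then have "coeff (root_poly I as) (n - k) = (-1) ^ k * sig I as (int k)"
      using coeff_root_poly_eq_sig[of k I as] assms(2) by simp
    then show "coeff (root_poly I as) (n - k) * u ^ (n - k) * Py ^ (2 * k + 1)
        = Py * ((-1) ^ k * sig I as (int k) * u ^ (n - k) * (Py ^ 2) ^ k)"
      by (simp add: mult_ac flip: power_mult)
  qed
  then show ?thesis
    using alt_binary_form_sig[OF assms(1)] assms(2) by simp
qed

lemma sum_even_powers_eq_alt_binary_form:
  "(\<Sum>k=0..n. (-1) ^ k * b k * u ^ (n - k) * P * Py ^ (2 * k)) = P * alt_binary_form n u (Py ^ 2) b"
  unfolding alt_binary_form_def sum_distrib_left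
  by (intro sum.cong refl) (simp add: mult_ac flip: power_mult)

lemma sum_odd_powers_eq_alt_binary_form:
  "(\<Sum>k=0..n. (-1) ^ (k + 1) / 2 * b k * u ^ (n - k) * Py ^ (2 * k + 1))
     = - (Py / 2) * alt_binary_form n u (Py ^ 2) b"
  unfolding alt_binary_form_def sum_distrib_left
  by (intro sum.cong refl) (simp add: mult_ac flip: power_mult)

(* c i plays the role of xi_i / sqrt Delta_i and e i that of eps_i xi_i^2. *)
lemma invariant_expansion:
  fixes I :: "nat set" and as c e :: "nat \<Rightarrow> real" and nu a y Pm Py H G Q1 Q2 :: real
  assumes "finite I" "card I = n"
    and weights: "\<And>i. i \<in> I \<Longrightarrow> c i ^ 2 * (a - as i) = e i"
    and H: "H = Pm ^ 2 + a * Py ^ 2"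
    and G: "G = (\<Sum>k=0..n. coeff (root_poly I as) (n - k) * H ^ (n - k) * Py ^ (2 * k + 1))"
    and Q1: "Q1 = (\<Sum>k=0..n. (-1) ^ k * (nu * sig I as (int k)
                + (\<Sum>i\<in>I. c i * sig (I - {i}) as (int k - 1))) * H ^ (n - k) * Pm * Py ^ (2 * k))"
    and Q2: "Q2 = (\<Sum>k=0..n. (-1) ^ (k + 1) / 2 * (nu ^ 2 * a * sig I as (int k)
                + 2 * nu * (\<Sum>i\<in>I. c i * (sig (I - {i}) as (int k) + a * sig (I - {i}) as (int k - 1)))
                + (\<Sum>i\<in>I. c i ^ 2 * sig (I - {i}) as (int k - 1))
                + (\<Sum>i\<in>I. \<Sum>j\<in>I - {i}. c i * c j
                      * (sig (I - {i, j}) as (int k - 1) + a * sig (I - {i, j}) as (int k - 2))))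
                * H ^ (n - k) * Py ^ (2 * k + 1))"
  shows "(Q1 + y * G) ^ 2 - 2 * G * (Q2 + y * Q1 + y ^ 2 / 2 * G) =
         (\<Sum>k=1..n. \<Sum>l=1..n. (-1) ^ (k + l + 1)
              * (\<Sum>i\<in>I. e i * sig (I - {i}) as (int k - 1) * sig (I - {i}) as (int l - 1))
              * H ^ (2 * n - k - l) * Py ^ (2 * (k + l + 1)))
         + nu ^ 2 * (\<Sum>k=0..n. \<Sum>l=0..n. (-1) ^ (k + l) * sig I as (int k) * sig I as (int l)
                        * H ^ (2 * n + 1 - k - l) * Py ^ (2 * (k + l)))"
proof -
  define v where "v = Py ^ 2"
  let ?R = "\<lambda>J. root_prod J as H v"
  define T where "T = (\<Sum>i\<in>I. c i * ?R (I - {i}))"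
  define C where "C = (\<Sum>i\<in>I. c i ^ 2 * ?R (I - {i}))"
  define W where "W = (\<Sum>i\<in>I. \<Sum>j\<in>I - {i}. c i * c j * ?R (I - {i, j}))"
  define D where "D = (\<Sum>i\<in>I. c i ^ 2 * ?R (I - {i}) ^ 2)"
  define E where "E = (\<Sum>i\<in>I. e i * ?R (I - {i}) ^ 2)"
  have G_eq: "G = Py * ?R I"
    unfolding G v_def by (rule sum_coeff_root_poly_powers[OF assms(1,2)])
  have Q1_eq: "Q1 = Pm * (nu * ?R I - v * T)"
    using alt_binary_form_bt_coeffs[OF assms(1)] assms(2)
    unfolding Q1 sum_even_powers_eq_alt_binary_form T_def v_def by simp
  have Q2_eq: "Q2 = - (Py / 2) * (nu ^ 2 * a * ?R I + 2 * nu * (H - a * v) * T - v * C - v * (H - a * v) * W)"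
    using alt_binary_form_ct_coeffs[OF assms(1)] assms(2)
    unfolding Q2 sum_odd_powers_eq_alt_binary_form T_def C_def W_def v_def by simp
  have "(Q1 + y * G) ^ 2 - 2 * G * (Q2 + y * Q1 + y ^ 2 / 2 * G) = Q1 ^ 2 - 2 * G * Q2"
    by (simp add: power2_eq_square algebra_simps)
  also have "\<dots> = nu ^ 2 * H * ?R I ^ 2 - v ^ 3 * E"
    unfolding G_eq Q1_eq Q2_eq
  proof (rule reduced_invariant_identity)
    show "Pm ^ 2 = H - a * v" "Py ^ 2 = v"
      by (simp_all add: H v_def)
    show "T ^ 2 = D + ?R I * W"
      unfolding T_def D_def W_def by (rule square_sum_root_prod_remove[OF assms(1)])
    show "(H - a * v) * D - ?R I * C = - (v * E)"
      unfolding D_def C_def E_def by (rule weighted_sum_root_prod_remove[OF assms(1) weights])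
  qed
  finally show ?thesis
    unfolding double_sum_sig_remove_eq[OF assms(1,2)] double_sum_sig_eq_square[OF assms(1,2)]
    by (simp add: E_def v_def power2_eq_square power3_eq_cube sum_distrib_left algebra_simps)
qed

theorem proposition26:
  fixes n :: nat and as eps xi :: "nat \<Rightarrow> real" and nu a y Pa Py :: real
  assumes n_pos: "n \<ge> 1"
    and distinct: "inj_on as {1..n}"
    and signs: "\<forall>i\<in>{1..n}. eps i = 1 \<or> eps i = -1"
    and a_pos: "a > 0"
    and Delta_pos: "\<forall>i\<in>{1..n}. eps i * (a - as i) > 0"
    and xdot_nz: "deriv (\<lambda>t. nu / 2 * t + (\<Sum>i=1..n. xi i / sqrt (eps i * (t - as i)))) a \<noteq> 0"
  shows
   "let x = (\<lambda>t. nu / 2 * t + (\<Sum>i=1..n. xi i / sqrt (eps i * (t - as i))));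
        Delta = (\<lambda>i. eps i * (a - as i));
        A = (\<lambda>k. coeff (root_poly {1..n} as) k);
        \<sigma> = (\<lambda>m. sig {1..n} as m);
        \<sigma>1 = (\<lambda>i m. sig ({1..n} - {i}) as m);
        \<sigma>2 = (\<lambda>i j m. sig ({1..n} - {i, j}) as m);
        Pmom = a / deriv x a * Pa;
        H = Pmom ^ 2 + a * Py ^ 2;
        bt = (\<lambda>k::nat. (-1) ^ k * (nu * \<sigma> (int k)
                + (\<Sum>i=1..n. xi i / sqrt (Delta i) * \<sigma>1 i (int k - 1))));
        ct = (\<lambda>k::nat. (-1) ^ (k + 1) / 2 * (nu ^ 2 * a * \<sigma> (int k)
                + 2 * nu * (\<Sum>i=1..n. xi i / sqrt (Delta i) * (\<sigma>1 i (int k) + a * \<sigma>1 i (int k - 1)))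
                + (\<Sum>i=1..n. xi i ^ 2 / Delta i * \<sigma>1 i (int k - 1))
                + (\<Sum>i=1..n. \<Sum>j\<in>{1..n} - {i}. xi i * xi j / sqrt (Delta i * Delta j)
                      * (\<sigma>2 i j (int k - 1) + a * \<sigma>2 i j (int k - 2)))));
        G = (\<Sum>k=0..n. A (n - k) * H ^ (n - k) * Py ^ (2 * k + 1));
        Q1 = (\<Sum>k=0..n. bt k * H ^ (n - k) * Pmom * Py ^ (2 * k));
        Q2 = (\<Sum>k=0..n. ct k * H ^ (n - k) * Py ^ (2 * k + 1));
        S1 = Q1 + y * G;
        S2 = Q2 + y * Q1 + y ^ 2 / 2 * G;
        Qc = (\<lambda>k l::nat. (-1) ^ (k + l + 1)
                * (\<Sum>i=1..n. eps i * xi i ^ 2 * \<sigma>1 i (int k - 1) * \<sigma>1 i (int l - 1)))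
    in S1 ^ 2 - 2 * G * S2 =
         (\<Sum>k=1..n. \<Sum>l=1..n. Qc k l * H ^ (2 * n - k - l) * Py ^ (2 * (k + l + 1)))
         + nu ^ 2 * (\<Sum>k=0..n. \<Sum>l=0..n. (-1) ^ (k + l) * \<sigma> (int k) * \<sigma> (int l)
                        * H ^ (2 * n + 1 - k - l) * Py ^ (2 * (k + l)))"
proof -
  \<comment> \<open>The identity is algebraic: only the signs and the positivity of the Delta_i are used.\<close>
  define c where "c i = xi i / sqrt (eps i * (a - as i))" for i
  have Delta_i_pos: "eps i * (a - as i) > 0" if "i \<in> {1..n}" for i
    using Delta_pos that by blast
  have c_sq: "xi i ^ 2 / (eps i * (a - as i)) = c i ^ 2" if "i \<in> {1..n}" for i
    using Delta_i_pos[OF that] by (simp add: c_def power_divide)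
  have c_mult: "xi i * xi j / sqrt (eps i * (a - as i) * (eps j * (a - as j))) = c i * c j"
    if "i \<in> {1..n}" "j \<in> {1..n}" for i j
    using Delta_i_pos[OF that(1)] Delta_i_pos[OF that(2)] by (simp add: c_def real_sqrt_mult)
  have weights: "c i ^ 2 * (a - as i) = eps i * xi i ^ 2" if "i \<in> {1..n}" for i
  proof -
    have "a - as i \<noteq> 0"
      using Delta_i_pos[OF that] by auto
    moreover have "eps i = 1 \<or> eps i = -1"
      using signs that by blast
    ultimately show ?thesis
      unfolding c_sq[OF that, symmetric] by (auto simp: field_simps)
  qed
  \<comment> \<open>refl instantiates the momentum Pm by the statement's own term before simp can normalise it.\<close>
  show ?thesis
    unfolding Let_def
    by (rule invariant_expansion[where c = c]; (rule refl)?)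
      (simp_all add: weights c_sq c_mult flip: c_def)
qed

end
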